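(* Let $\Omega$ be a finite set, $K\ge 1$ the number of labels, and let $A$ be a symmetric real $|\Omega|\times|\Omega|$ affinity matrix; put $d=A\mathbf{1}$ and $D=\mathrm{diag}(d)$. For a labeling $S:\Omega\to\{1,\dots,K\}$ identify each segment $S^k=\{p:S_p=k\}$ with its indicator vector in $\{0,1\}^{\Omega}$. Consider one of the three clustering objectives (defined for labelings with all segments nonempty; for NC assume $d_p>0$ for all $p$): (AA) $E_A(S)=-\sum_k \frac{{S^k}'AS^k}{\mathbf{1}'S^k}$, with $\mathcal{K}=\delta I+A$, $w=\mathbf{1}$; (AC) $E_A(S)=\sum_k \frac{{S^k}'(D-A)S^k}{\mathbf{1}'S^k}$, with $\mathcal{K}=\delta I+A-D$, $w=\mathbf{1}$; (NC) $E_A(S)=-\sum_k \frac{{S^k}'AS^k}{d'S^k}$, with $\mathcal{K}=\delta D+A$, $w=d$; where $\delta\in\mathbb{R}$ is chosen large enough that the corresponding $\mathcal{K}$ is positive semi-definite. Define $\hat e(X)=-\frac{X'\mathcal{K}X}{w'X}$ and, for $w'X>0$, $$\nabla\hat e(X)= w\,\frac{X'\mathcal{K}X}{(w'X)^2}-\mathcal{K}X\,\frac{2}{w'X}.$$ Let $\mathcal{F}$ be any collection of subsets (factors) $c\subseteq\Omega$, let $E_c$ be arbitrary real functions of the restricted labeling $S_c=(S_p)_{p\in c}$, let $\gamma\in\mathbb{R}$, and let $E(S)=E_A(S)+\gamma\sum_{c\in\mathcal{F}}E_c(S_c)$. Let $S_t$ be any labeling with all segments nonempty and define $$a_t(S)=\sum_{k=1}^K\nabla\hat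 e(S^k_t)'\,S^k+\gamma\sum_{c\in\mathcal{F}}E_c(S_c).$$ Then for every labeling $S$ with all segments nonempty, $E(S)\le a_t(S)+K\delta$, with equality for $S=S_t$; i.e. $a_t+K\delta$ is an auxiliary function for $E$ at $S_t$.
   Context: An auxiliary function for an energy $E$ at $S_t$ is a function $a$ with $E(S)\le a(S)$ for all admissible $S$ and $E(S_t)=a(S_t)$. $\mathbf{1}$ is the all-ones vector, $I$ the identity matrix, and $'$ denotes transpose. *)

theory Defs
  imports "HOL-Analysis.Analysis"
begin

text \<open>The finite set Omega is the finite index type 'n; vectors are real^'n,
  matrices real^'n^'n. Labels are natural numbers 1..K.\<close>

datatype objective = AA | AC | NC

definition ones :: "real^'n" where
  "ones = vec 1"

definition seg :: "('n \<Rightarrow> nat) \<Rightarrow> nat \<Rightarrow> real^'n" where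
  "seg S k = (\<chi> p. if S p = k then 1 else 0)"

definition degv :: "real^'n^'n \<Rightarrow> real^'n" where
  "degv A = A *v ones"

definition Dmat :: "real^'n^'n \<Rightarrow> real^'n^'n" where
  "Dmat A = (\<chi> i j. if i = j then degv A $ i else 0)"

definition Kmat :: "objective \<Rightarrow> real \<Rightarrow> real^'n^'n \<Rightarrow> real^'n^'n" where
  "Kmat obj \<delta> A = (case obj of
      AA \<Rightarrow> \<delta> *\<^sub>R mat 1 + A
    | AC \<Rightarrow> \<delta> *\<^sub>R mat 1 + A - Dmat A
    | NC \<Rightarrow> \<delta> *\<^sub>R Dmat A + A)"

definition wvec :: "objective \<Rightarrow> real^'n^'n \<Rightarrow> real^'n" where
  "wvec obj A = (case obj of NC \<Rightarrow> degv A | _ \<Rightarrow> ones)"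

definition EA :: "objective \<Rightarrow> real^'n^'n \<Rightarrow> nat \<Rightarrow> ('n \<Rightarrow> nat) \<Rightarrow> real" where
  "EA obj A K S = (case obj of
      AA \<Rightarrow> - (\<Sum>k=1..K. (seg S k \<bullet> (A *v seg S k)) / (ones \<bullet> seg S k))
    | AC \<Rightarrow> (\<Sum>k=1..K. (seg S k \<bullet> ((Dmat A - A) *v seg S k)) / (ones \<bullet> seg S k))
    | NC \<Rightarrow> - (\<Sum>k=1..K. (seg S k \<bullet> (A *v seg S k)) / (degv A \<bullet> seg S k)))"

definition ehat :: "real^'n^'n \<Rightarrow> real^'n \<Rightarrow> real^'n \<Rightarrow> real" where
  "ehat M w X = - (X \<bullet> (M *v X)) / (w \<bullet> X)"

definition grad_ehat :: "real^'n^'n \<Rightarrow> real^'n \<Rightarrow> real^'n \<Rightarrow> real^'n" where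
  "grad_ehat M w X = ((X \<bullet> (M *v X)) / (w \<bullet> X)^2) *\<^sub>R w - (2 / (w \<bullet> X)) *\<^sub>R (M *v X)"

definition psd :: "real^'n^'n \<Rightarrow> bool" where
  "psd M \<longleftrightarrow> (\<forall>x. 0 \<le> x \<bullet> (M *v x))"

definition admissible :: "nat \<Rightarrow> ('n \<Rightarrow> nat) \<Rightarrow> bool" where
  "admissible K S \<longleftrightarrow> (\<forall>p. S p \<in> {1..K}) \<and> (\<forall>k\<in>{1..K}. \<exists>p. S p = k)"

definition Efull :: "objective \<Rightarrow> real^'n^'n \<Rightarrow> nat \<Rightarrow> real \<Rightarrow> 'n set set
      \<Rightarrow> ('n set \<Rightarrow> ('n \<Rightarrow> nat) \<Rightarrow> real) \<Rightarrow> ('n \<Rightarrow> nat) \<Rightarrow> real" where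
  "Efull obj A K \<gamma> F Ec S = EA obj A K S + \<gamma> * (\<Sum>c\<in>F. Ec c (restrict S c))"

definition aux_at :: "objective \<Rightarrow> real^'n^'n \<Rightarrow> real \<Rightarrow> nat \<Rightarrow> real \<Rightarrow> 'n set set
      \<Rightarrow> ('n set \<Rightarrow> ('n \<Rightarrow> nat) \<Rightarrow> real) \<Rightarrow> ('n \<Rightarrow> nat) \<Rightarrow> ('n \<Rightarrow> nat) \<Rightarrow> real" where
  "aux_at obj A \<delta> K \<gamma> F Ec St S =
     (\<Sum>k=1..K. grad_ehat (Kmat obj \<delta> A) (wvec obj A) (seg St k) \<bullet> seg S k)
     + \<gamma> * (\<Sum>c\<in>F. Ec c (restrict S c))"

end

theory Submission
  imports Defs
begin

text \<open>For a positive semi-definite \<open>M\<close> the map \<open>X \<mapsto> -X'MX/w'X\<close> is concave on the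
  half-space \<open>w'X > 0\<close>, so it lies below its tangent plane at every point \<open>Y\<close> there; the
  tangent plane is linear because the function is homogeneous of degree one. Each objective
  equals \<open>\<Sum>\<^sub>k ehat (S\<^sup>k) + K\<delta>\<close> (the \<open>\<delta>\<close>-term of \<open>\<K>\<close> contributes exactly \<open>\<delta>\<close> per
  segment, since indicator vectors satisfy \<open>S'S = \<one>'S\<close> and \<open>S'DS = d'S\<close>), and the factor
  terms appear identically on both sides.\<close>

lemma inner_matrix_vector_commute:
  fixes M :: "real^'n^'n"
  assumes "transpose M = M"
  shows "X \<bullet> (M *v Y) = Y \<bullet> (M *v X)"
  by (metis assms dot_lmul_matrix inner_commute transpose_matrix_vector)

lemma ehat_le_grad_ehat_inner:
  fixes M :: "real^'n^'n"
  assumes psd: "psd M" and sym: "transpose M = M"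
    and X: "w \<bullet> X > 0" and Y: "w \<bullet> Y > 0"
  shows "ehat M w X \<le> grad_ehat M w Y \<bullet> X"
proof -
  define t where "t = (w \<bullet> X) / (w \<bullet> Y)"
  have XY: "X \<bullet> (M *v Y) = Y \<bullet> (M *v X)" by (rule inner_matrix_vector_commute[OF sym])
  \<comment> \<open>positivity of the quadratic form on \<open>X - tY\<close>, the point where \<open>w'(X - tY) = 0\<close>\<close>
  have "0 \<le> (X - t *\<^sub>R Y) \<bullet> (M *v (X - t *\<^sub>R Y))" using psd unfolding psd_def by blast
  also have "\<dots> = X \<bullet> (M *v X) - 2 * t * (X \<bullet> (M *v Y)) + t^2 * (Y \<bullet> (M *v Y))"
    using XY by (simp add: matrix_vector_mult_diff_distrib matrix_vector_mult_scaleR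
        inner_diff_left inner_diff_right algebra_simps power2_eq_square)
  also have "\<dots> = (w \<bullet> X) * (grad_ehat M w Y \<bullet> X - ehat M w X)"
    using X Y XY unfolding grad_ehat_def ehat_def t_def
    by (simp add: inner_diff_right inner_commute field_simps power2_eq_square)
  finally show ?thesis using X by (simp add: zero_le_mult_iff)
qed

lemma grad_ehat_inner_self:
  assumes "w \<bullet> Y \<noteq> 0"
  shows "grad_ehat M w Y \<bullet> Y = ehat M w Y"
  using assms unfolding grad_ehat_def ehat_def
  by (simp add: inner_diff_right inner_commute field_simps power2_eq_square)

lemma transpose_Kmat:
  assumes "transpose A = A"
  shows "transpose (Kmat obj \<delta> A) = Kmat obj \<delta> A"
proof -
  have "A $ j $ i = A $ i $ j" for i j using assms by (metis transpose_def vec_lambda_beta)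
  then show ?thesis
    by (cases obj) (auto simp: Kmat_def transpose_def vec_eq_iff mat_def Dmat_def)
qed

lemma inner_seg_self: "seg S k \<bullet> seg S k = ones \<bullet> seg S k"
  by (auto simp: ones_def inner_vec_def seg_def intro!: sum.cong)

lemma inner_seg_Dmat: "seg S k \<bullet> (Dmat A *v seg S k) = degv A \<bullet> seg S k"
proof -
  have "Dmat A *v seg S k = (\<chi> i. degv A $ i * seg S k $ i)"
    by (simp add: vec_eq_iff matrix_vector_mult_def Dmat_def if_distrib[of "\<lambda>c. c * _"] cong: if_cong)
  then show ?thesis by (simp add: inner_vec_def seg_def mult.commute if_distrib cong: if_cong)
qed

lemma inner_seg_pos:
  assumes "\<forall>q. v $ q > 0" and "S p = k"
  shows "v \<bullet> seg S k > (0::real)"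
proof -
  have "v $ p \<le> (\<Sum>q\<in>UNIV. v $ q * seg S k $ q)"
    using member_le_sum[of p UNIV "\<lambda>q. v $ q * seg S k $ q"] assms
    by (simp add: seg_def less_imp_le)
  then show ?thesis using assms(1)[rule_format, of p] by (simp add: inner_vec_def)
qed

lemma wvec_inner_seg_pos:
  assumes "obj = NC \<longrightarrow> (\<forall>p. degv A $ p > 0)" and "S p = k"
  shows "wvec obj A \<bullet> seg S k > 0"
  using assms by (cases obj) (simp_all add: wvec_def ones_def inner_seg_pos)

lemma EA_eq_sum_ehat:
  assumes deg: "obj = NC \<longrightarrow> (\<forall>p. degv A $ p > 0)" and S: "admissible K S"
  shows "EA obj A K S = (\<Sum>k=1..K. ehat (Kmat obj \<delta> A) (wvec obj A) (seg S k)) + real K * \<delta>"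
proof -
  have term_eq: "ehat (Kmat obj \<delta> A) (wvec obj A) (seg S k) + \<delta> =
     (case obj of AA \<Rightarrow> - ((seg S k \<bullet> (A *v seg S k)) / (ones \<bullet> seg S k))
      | AC \<Rightarrow> (seg S k \<bullet> ((Dmat A - A) *v seg S k)) / (ones \<bullet> seg S k)
      | NC \<Rightarrow> - ((seg S k \<bullet> (A *v seg S k)) / (degv A \<bullet> seg S k)))"
    if k: "k \<in> {1..K}" for k
  proof -
    obtain p where "S p = k" using S k unfolding admissible_def by blast
    then have w: "wvec obj A \<bullet> seg S k > 0" by (rule wvec_inner_seg_pos[OF deg])
    show ?thesis
    proof (cases obj)
      case AA
      with w have "ones \<bullet> seg S k > 0" by (simp add: wvec_def)
      with AA show ?thesis
        by (simp add: ehat_def Kmat_def wvec_def scaleR_matrix_vector_assoc[symmetric]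
            matrix_vector_mult_add_rdistrib inner_add_right inner_seg_self field_simps)
    next
      case AC
      with w have "ones \<bullet> seg S k > 0" by (simp add: wvec_def)
      with AC show ?thesis
        by (simp add: ehat_def Kmat_def wvec_def scaleR_matrix_vector_assoc[symmetric]
            matrix_vector_mult_add_rdistrib matrix_vector_mult_diff_rdistrib inner_add_right
            inner_diff_right inner_seg_self inner_seg_Dmat field_simps)
    next
      case NC
      with w have "degv A \<bullet> seg S k > 0" by (simp add: wvec_def)
      with NC show ?thesis
        by (simp add: ehat_def Kmat_def wvec_def scaleR_matrix_vector_assoc[symmetric]
            matrix_vector_mult_add_rdistrib inner_add_right inner_seg_Dmat field_simps)
    qed
  qed
  have "(\<Sum>k=1..K. ehat (Kmat obj \<delta> A) (wvec obj A) (seg S k) + \<delta>) = EA obj A K S"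
    using term_eq by (cases obj) (simp_all add: EA_def sum_negf)
  then show ?thesis by (simp add: sum.distrib)
qed

theorem theorem2:
  fixes obj :: objective and A :: "real^'n^'n" and K :: nat and \<delta> \<gamma> :: real
    and F :: "'n set set" and Ec :: "'n set \<Rightarrow> ('n \<Rightarrow> nat) \<Rightarrow> real"
    and St :: "'n \<Rightarrow> nat"
  assumes "K \<ge> 1"
    and "transpose A = A"
    and "obj = NC \<longrightarrow> (\<forall>p. degv A $ p > 0)"
    and "psd (Kmat obj \<delta> A)"
    and "admissible K St"
  shows "(\<forall>S. admissible K S \<longrightarrow>
            Efull obj A K \<gamma> F Ec S \<le> aux_at obj A \<delta> K \<gamma> F Ec St S + real K * \<delta>)
         \<and> Efull obj A K \<gamma> F Ec St = aux_at obj A \<delta> K \<gamma> F Ec St St + real K * \<delta>"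
proof -
  let ?M = "Kmat obj \<delta> A" and ?w = "wvec obj A"
  have w_pos: "?w \<bullet> seg S k > 0" if "admissible K S" "k \<in> {1..K}" for S k
    using that wvec_inner_seg_pos[OF assms(3)] unfolding admissible_def by blast
  have "(\<Sum>k=1..K. ehat ?M ?w (seg S k)) \<le> (\<Sum>k=1..K. grad_ehat ?M ?w (seg St k) \<bullet> seg S k)"
    if "admissible K S" for S
    using ehat_le_grad_ehat_inner[OF assms(4) transpose_Kmat[OF assms(2)]] w_pos that assms(5)
    by (intro sum_mono) simp
  moreover have "(\<Sum>k=1..K. ehat ?M ?w (seg St k)) = (\<Sum>k=1..K. grad_ehat ?M ?w (seg St k) \<bullet> seg St k)"
    by (intro sum.cong refl grad_ehat_inner_self[symmetric]) (metis w_pos[OF assms(5)] less_irrefl)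
  ultimately show ?thesis
    unfolding Efull_def aux_at_def using EA_eq_sum_ehat[OF assms(3), of K _ \<delta>] assms(5) by simp
qed

end
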